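(* Let $(J,S)$ be a homogeneous $d$-dimensional multi-time Markov renewal chain with semi-Markov kernel $q$, $u=\sum_{n\ge0}q^{(n)}$, Markov renewal function $U$, and first-hitting-time distribution functions $G=(G_{ij})_{i,j\in E}$. Then $$G=(U-\mathrm{dg}(\mathbbm{1}_s))*\mathrm{dg}(u)^{(-1)}.$$
   Context: $E=\{1,\dots,s\}$; $\mathcal{M}_s(\mathbb{N}^d)$ is the set of functions $\mathbb{N}^d\to\mathbb{R}^{s\times s}$ with convolution $[A*B](k)=\sum_{l+l'=k}A(l)B(l')$, identity $\mathbbm{I}_s$, powers $A^{(n)}$, convolutional inverse $A^{(-1)}$. $\mathrm{dg}(\mathbbm{1}_s)$ is the matrix sequence equal to $I_s$ at every point. $\mathbb{N}^d$ has the componentwise partial order, $k<l$ meaning $k\le l$, $k\ne l$. A homogeneous $d$-dimensional multi-time Markov renewal chain is a process $(J_n,S_n)_{n\in\mathbb{N}}$, $J_n\in E$, $S_n\in\mathbb{N}^d$, $S_0=0_d$, $S_n<S_{n+1}$, with a.s. $\mathbb{P}(J_{n+1}=j,S_{n+1}-S_n=k\mid J_{0:n},S_{0:n})=q_{J_nj}(k)$, $q_{ij}(k)=\mathbb{P}(J_{n+1}=j,S_{n+1}-S_n=k\mid J_n=i)$ independent of $n$. $\mathbb{P}_i,\mathbb{E}_i$: conditional on $J_0=i$. $\mathrm{dg}(u)$: diagonal matrix sequence with entries $u_{jj}$. $N(k)=\sup\{n:S_n\le k\}$, $\widetilde{N}_j(k)=\sum_{n=0}^{N(k)}\mathbf{1}\{J_n=j\}$,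 $U_{ij}(k)=\mathbb{E}_i[\widetilde{N}_j(k)]$. With $m_j=\min\{l\ge1:J_l=j\}$, $g_{ij}(k)=\mathbb{P}_i(S_{m_j}=k)$ and $G_{ij}(k)=\sum_{l\le k}g_{ij}(l)=\mathbb{P}_i(S_{m_j}\le k)$. *)

theory Defs
  imports "HOL-Probability.Probability" "HOL-Library.Function_Algebras"
begin

text \<open>Time points live in N^d, rendered as functions 'd => nat for a finite index type 'd
  (componentwise order le_fun, pointwise addition/subtraction).  The state space E is a
  finite type 'e (s = CARD('e)); s x s matrices are real^'e^'e.\<close>

type_synonym ('d, 'e) mseq = "('d \<Rightarrow> nat) \<Rightarrow> real^'e^'e"

definition conv :: "('d::finite, 'e::finite) mseq \<Rightarrow> ('d, 'e) mseq \<Rightarrow> ('d, 'e) mseq" where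
  "conv A B = (\<lambda>k. \<Sum>l\<in>{l. l \<le> k}. A l ** B (k - l))"

definition conv_id :: "('d::finite, 'e::finite) mseq" where
  "conv_id = (\<lambda>k. if k = 0 then mat 1 else 0)"

fun conv_pow :: "('d::finite, 'e::finite) mseq \<Rightarrow> nat \<Rightarrow> ('d, 'e) mseq" where
  "conv_pow A 0 = conv_id"
| "conv_pow A (Suc n) = conv (conv_pow A n) A"

definition conv_inv :: "('d::finite, 'e::finite) mseq \<Rightarrow> ('d, 'e) mseq" where
  "conv_inv A = (THE B. conv A B = conv_id \<and> conv B A = conv_id)"

text \<open>dg(u): diagonal part; dg_one = dg(1_s), the identity matrix at every point.\<close>
definition dg :: "('d::finite, 'e::finite) mseq \<Rightarrow> ('d, 'e) mseq" where
  "dg A = (\<lambda>k. \<chi> i j. if i = j then A k $ i $ j else 0)"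

definition dg_one :: "('d::finite, 'e::finite) mseq" where
  "dg_one = (\<lambda>k. mat 1)"

definition to_mseq :: "('e::finite \<Rightarrow> 'e \<Rightarrow> ('d::finite \<Rightarrow> nat) \<Rightarrow> real) \<Rightarrow> ('d, 'e) mseq" where
  "to_mseq f = (\<lambda>k. \<chi> i j. f i j k)"

text \<open>The a.s. conditional-probability property is expressed through the
  (equivalent, everything being discrete) finite-dimensional path probabilities.\<close>
definition MRC :: "'a measure \<Rightarrow> (nat \<Rightarrow> 'a \<Rightarrow> 'e) \<Rightarrow> (nat \<Rightarrow> 'a \<Rightarrow> ('d::finite \<Rightarrow> nat))
    \<Rightarrow> ('e \<Rightarrow> 'e \<Rightarrow> ('d \<Rightarrow> nat) \<Rightarrow> real) \<Rightarrow> bool" where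
  "MRC M J S q \<longleftrightarrow> prob_space M
    \<and> (\<forall>n. J n \<in> measurable M (count_space UNIV))
    \<and> (\<forall>n. S n \<in> measurable M (count_space UNIV))
    \<and> (AE \<omega> in M. S 0 \<omega> = 0)
    \<and> (\<forall>n. AE \<omega> in M. S n \<omega> < S (Suc n) \<omega>)
    \<and> (\<forall>n jj ss j k.
         measure M {\<omega>\<in>space M. (\<forall>m\<le>n. J m \<omega> = jj m \<and> S m \<omega> = ss m)
                              \<and> J (Suc n) \<omega> = j \<and> S (Suc n) \<omega> - S n \<omega> = k}
       = measure M {\<omega>\<in>space M. \<forall>m\<le>n. J m \<omega> = jj m \<and> S m \<omega> = ss m} * q (jj n) j k)"

definition Ncount :: "(nat \<Rightarrow> 'a \<Rightarrow> ('d::finite \<Rightarrow> nat)) \<Rightarrow> ('d \<Rightarrow> nat) \<Rightarrow> 'a \<Rightarrow> nat" where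
  "Ncount S k \<omega> = Sup {n. S n \<omega> \<le> k}"

definition Ntilde :: "(nat \<Rightarrow> 'a \<Rightarrow> 'e) \<Rightarrow> (nat \<Rightarrow> 'a \<Rightarrow> ('d::finite \<Rightarrow> nat)) \<Rightarrow> 'e \<Rightarrow> ('d \<Rightarrow> nat) \<Rightarrow> 'a \<Rightarrow> nat" where
  "Ntilde J S j k \<omega> = (\<Sum>n\<le>Ncount S k \<omega>. if J n \<omega> = j then 1 else 0)"

text \<open>Markov renewal function: U i j k = E_i[Ntilde_j(k)], where P_i = M i.\<close>
definition renewal_fun :: "('e \<Rightarrow> 'a measure) \<Rightarrow> (nat \<Rightarrow> 'a \<Rightarrow> 'e) \<Rightarrow> (nat \<Rightarrow> 'a \<Rightarrow> ('d::finite \<Rightarrow> nat))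
    \<Rightarrow> 'e \<Rightarrow> 'e \<Rightarrow> ('d \<Rightarrow> nat) \<Rightarrow> real" where
  "renewal_fun M J S i j k = (\<integral>\<omega>. real (Ntilde J S j k \<omega>) \<partial>M i)"

text \<open>First hitting time m_j = min{l >= 1. J_l = j}; the event S_{m_j} = k requires m_j finite.\<close>
definition hit_dens :: "('e \<Rightarrow> 'a measure) \<Rightarrow> (nat \<Rightarrow> 'a \<Rightarrow> 'e) \<Rightarrow> (nat \<Rightarrow> 'a \<Rightarrow> ('d::finite \<Rightarrow> nat))
    \<Rightarrow> 'e \<Rightarrow> 'e \<Rightarrow> ('d \<Rightarrow> nat) \<Rightarrow> real" where
  "hit_dens M J S i j k = measure (M i) {\<omega>\<in>space (M i). (\<exists>l\<ge>1. J l \<omega> = j)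
        \<and> S (LEAST l. 1 \<le> l \<and> J l \<omega> = j) \<omega> = k}"

definition hit_dist :: "('e \<Rightarrow> 'a measure) \<Rightarrow> (nat \<Rightarrow> 'a \<Rightarrow> 'e) \<Rightarrow> (nat \<Rightarrow> 'a \<Rightarrow> ('d::finite \<Rightarrow> nat))
    \<Rightarrow> 'e \<Rightarrow> 'e \<Rightarrow> ('d \<Rightarrow> nat) \<Rightarrow> real" where
  "hit_dist M J S i j k = (\<Sum>l\<in>{l. l \<le> k}. hit_dens M J S i j l)"

end

theory Submission
  imports Defs
begin

text \<open>Let g be the matrix of first-passage densities and u = \<Sum>n q^(n).  Splitting a visit
  to j at a step n \<ge> 1 at the first visit to j gives the Markov renewal equation
  u = \<delta> + g * dg(u), with \<delta> the convolution identity.  Its diagonal shows that dg(u) has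
  the convolution inverse \<delta> - dg(g).  Summation over {l. l \<le> k} is convolution with the
  constant sequence dg(1), which commutes with everything; hence U = u * dg(1), G = g * dg(1) and
  G = g * dg(u) * dg(u)^(-1) * dg(1) = (u - \<delta>) * dg(1) * dg(u)^(-1) = (U - dg(1)) * dg(u)^(-1).
  All sums are finite: the times S_n increase strictly, so the coordinate sum of S_n is at least n.\<close>

section \<open>Convolution of matrix sequences\<close>

lemma finite_atMost_fun [simp]: "finite {..k :: 'd::finite \<Rightarrow> nat}"
proof (rule finite_subset)
  show "{..k} \<subseteq> Pi\<^sub>E UNIV (\<lambda>d. {..k d})"
    by (auto simp: le_fun_def PiE_def Pi_def extensional_def)
  show "finite (Pi\<^sub>E (UNIV :: 'd set) (\<lambda>d. {..k d}))"
    by (intro finite_PiE) auto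
qed

lemma conv_altdef: "conv A B k = (\<Sum>l\<le>k. A l ** B (k - l))"
  by (simp add: conv_def atMost_def)

lemma fun_diff_add_cancel: "(l :: 'd \<Rightarrow> nat) \<le> k \<Longrightarrow> l + (k - l) = k"
  by (auto simp: le_fun_def fun_eq_iff)

lemma fun_diff_diff_cancel: "(l :: 'd \<Rightarrow> nat) \<le> k \<Longrightarrow> k - (k - l) = l"
  by (auto simp: le_fun_def fun_eq_iff)

lemma fun_eq_add_split:
  fixes a b l k :: "'d \<Rightarrow> nat"
  assumes "l \<le> a" and "a \<le> b"
  shows "b = l + k \<longleftrightarrow> (\<exists>c\<le>k. a = l + c \<and> b - a = k - c)"
proof
  assume "b = l + k"
  with assms show "\<exists>c\<le>k. a = l + c \<and> b - a = k - c"
    by (intro exI[of _ "a - l"]) (auto simp: le_fun_def fun_eq_iff le_diff_conv add.commute)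
next
  assume "\<exists>c\<le>k. a = l + c \<and> b - a = k - c"
  then obtain c where "c \<le> k" "a = l + c" "b - a = k - c" by blast
  with assms show "b = l + k"
    by (auto simp: le_fun_def fun_eq_iff) (metis add.assoc le_add_diff_inverse)
qed

lemma sum_atMost_fun_triangle:
  fixes f :: "('d::finite \<Rightarrow> nat) \<Rightarrow> ('d \<Rightarrow> nat) \<Rightarrow> 'b::comm_monoid_add"
  shows "(\<Sum>l\<le>k. \<Sum>a\<le>l. f a l) = (\<Sum>a\<le>k. \<Sum>b\<le>k - a. f a (a + b))"
proof -
  have "(\<Sum>l\<le>k. \<Sum>a\<le>l. f a l) = (\<Sum>l\<le>k. \<Sum>a\<in>{a\<in>{..k}. a \<le> l}. f a l)"
    by (intro sum.cong refl) (auto intro: order_trans)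
  also have "\<dots> = (\<Sum>a\<le>k. \<Sum>l\<in>{l\<in>{..k}. a \<le> l}. f a l)"
    by (rule sum.swap_restrict) auto
  also have "\<dots> = (\<Sum>a\<le>k. \<Sum>b\<le>k - a. f a (a + b))"
  proof (rule sum.cong[OF refl])
    fix a assume "a \<in> {..k}"
    then show "(\<Sum>l\<in>{l\<in>{..k}. a \<le> l}. f a l) = (\<Sum>b\<le>k - a. f a (a + b))"
      by (intro sum.reindex_bij_witness[where i="\<lambda>b. a + b" and j="\<lambda>l. l - a"])
         (auto simp: fun_diff_add_cancel le_fun_def le_diff_conv2 add.commute intro: diff_le_mono)
  qed
  finally show ?thesis .
qed

lemma matrix_mult_sum_left: "(\<Sum>a\<in>A. f a) ** (B :: 'a::semiring_1^'n^'m) = (\<Sum>a\<in>A. f a ** B)"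
  by (induction A rule: infinite_finite_induct)
     (simp_all add: matrix_matrix_mult_def vec_eq_iff sum.distrib distrib_right)

lemma matrix_mult_sum_right: "(A :: 'a::semiring_1^'n^'m) ** (\<Sum>b\<in>B. f b) = (\<Sum>b\<in>B. A ** f b)"
  by (induction B rule: infinite_finite_induct) (simp_all add: matrix_add_ldistrib)

lemma conv_assoc: "conv (conv A B) C = conv A (conv B C)"
proof
  fix k
  have "conv (conv A B) C k = (\<Sum>l\<le>k. \<Sum>a\<le>l. A a ** B (l - a) ** C (k - l))"
    by (simp add: conv_altdef matrix_mult_sum_left)
  also have "\<dots> = (\<Sum>a\<le>k. \<Sum>b\<le>k - a. A a ** B (a + b - a) ** C (k - (a + b)))"
    by (rule sum_atMost_fun_triangle)
  also have "\<dots> = conv A (conv B C) k"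
    by (simp add: conv_altdef matrix_mult_sum_right matrix_mul_assoc diff_diff_eq[symmetric] add.commute)
  finally show "conv (conv A B) C k = conv A (conv B C) k" .
qed

lemma conv_commute:
  assumes "\<And>l m. A l ** B m = B m ** A l"
  shows "conv A B = conv B A"
proof
  fix k
  show "conv A B k = conv B A k"
    unfolding conv_altdef
    by (rule sum.reindex_bij_witness[where i="\<lambda>l. k - l" and j="\<lambda>l. k - l"])
       (auto simp: assms fun_diff_diff_cancel le_fun_def)
qed

lemma conv_id_right [simp]: "conv A conv_id = A"
proof
  fix k
  have "conv A conv_id k = (\<Sum>l\<le>k. if l = k then A l else 0)"
    unfolding conv_altdef conv_id_def
    by (intro sum.cong refl) (auto simp: le_fun_def fun_eq_iff intro: antisym)
  then show "conv A conv_id k = A k" by simp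
qed

lemma conv_id_left [simp]: "conv conv_id A = A"
proof -
  have "conv conv_id A = conv A conv_id"
    by (rule conv_commute) (simp add: conv_id_def)
  then show ?thesis by simp
qed

lemma matrix_mult_diff_left: "(A - B) ** (C :: 'a::ring_1^'n^'m) = A ** C - B ** C"
  by (simp add: matrix_matrix_mult_def vec_eq_iff left_diff_distrib sum_subtractf)

lemma conv_diff_left: "conv (A - B) C = conv A C - conv B C"
  by (simp add: fun_eq_iff conv_altdef matrix_mult_diff_left sum_subtractf)

lemma conv_dg_one_commute: "conv dg_one A = conv A dg_one"
  by (rule conv_commute) (simp add: dg_one_def)

lemma conv_dg_one: "conv A dg_one k = (\<Sum>l\<le>k. A l)"
  by (simp add: conv_altdef dg_one_def)

lemma dg_add: "dg (A + B) = dg A + dg B"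
  by (simp add: dg_def fun_eq_iff vec_eq_iff)

lemma dg_conv_id [simp]: "dg conv_id = conv_id"
  by (simp add: dg_def conv_id_def fun_eq_iff vec_eq_iff mat_def)

lemma dg_diff: "dg (A - B) = dg A - dg B"
  by (simp add: dg_def fun_eq_iff vec_eq_iff)

lemma dg_entry: "dg A k $ i $ j = (if i = j then A k $ i $ j else 0)"
  by (simp add: dg_def)

lemma dg_mult_entry: "(dg A l ** M) $ i $ j = A l $ i $ i * M $ i $ j"
  by (simp add: matrix_matrix_mult_def dg_def if_distrib[of "\<lambda>x. x * _"] cong: if_cong)

lemma mult_dg_entry: "(M ** dg A l) $ i $ j = M $ i $ j * A l $ j $ j"
  by (simp add: matrix_matrix_mult_def dg_def if_distrib[of "\<lambda>x. _ * x"] cong: if_cong)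

lemma dg_mult_dg_commute: "dg A l ** dg B m = dg B m ** dg A l"
  by (simp add: vec_eq_iff dg_mult_entry dg_entry)

lemma dg_conv_dg: "dg (conv A (dg B)) = conv (dg A) (dg B)"
  by (simp add: fun_eq_iff vec_eq_iff conv_def dg_mult_entry mult_dg_entry dg_entry)

lemma conv_inv_eqI:
  assumes "conv A B = conv_id" and "conv B A = conv_id"
  shows "conv_inv A = B"
  unfolding conv_inv_def
proof (rule the_equality)
  show "conv A B = conv_id \<and> conv B A = conv_id" using assms ..
next
  fix C assume C: "conv A C = conv_id \<and> conv C A = conv_id"
  have "C = conv (conv B A) C" by (simp add: assms(2))
  also have "\<dots> = conv B (conv A C)" by (rule conv_assoc)
  also have "\<dots> = B" using C by simp
  finally show "C = B" .
qed

lemma dg_renewal_conv_inverse: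
  assumes renewal: "u = conv_id + conv g (dg u)"
  shows "conv (dg (conv_id - g)) (dg u) = conv_id" and "conv (dg u) (dg (conv_id - g)) = conv_id"
proof -
  have "dg u = dg (conv_id + conv g (dg u))"
    using renewal by (rule arg_cong)
  also have "\<dots> = conv_id + conv (dg g) (dg u)"
    by (simp add: dg_add dg_conv_dg)
  finally have "conv (dg g) (dg u) = dg u - conv_id"
    by (metis add_diff_cancel_left')
  then show left: "conv (dg (conv_id - g)) (dg u) = conv_id"
    by (simp add: dg_diff conv_diff_left)
  then show "conv (dg u) (dg (conv_id - g)) = conv_id"
    using conv_commute[of "dg u" "dg (conv_id - g)", OF dg_mult_dg_commute] by simp
qed

lemma renewal_equation_solution:
  assumes renewal: "u = conv_id + conv g (dg u)"
  shows "conv g dg_one = conv (conv u dg_one - dg_one) (conv_inv (dg u))"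
proof -
  note inverse = dg_renewal_conv_inverse[OF renewal]
  have "conv u dg_one - dg_one = conv (u - conv_id) dg_one"
    by (simp add: conv_diff_left)
  also have "\<dots> = conv (conv g (dg u)) dg_one"
    using renewal by (metis add_diff_cancel_left')
  finally have "conv (conv u dg_one - dg_one) (conv_inv (dg u))
      = conv g (conv dg_one (conv (dg u) (dg (conv_id - g))))"
    by (simp add: conv_inv_eqI[OF inverse(2,1)] conv_assoc conv_dg_one_commute)
  then show ?thesis
    by (simp add: inverse(2))
qed

section \<open>Truncation of convolution powers\<close>

definition weight :: "('d::finite \<Rightarrow> nat) \<Rightarrow> nat" where
  "weight k = (\<Sum>d\<in>UNIV. k d)"

lemma weight_strict_mono: "(a :: 'd::finite \<Rightarrow> nat) < b \<Longrightarrow> weight a < weight b"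
  unfolding weight_def
  by (rule sum_strict_mono_ex1) (auto simp: less_fun_def le_fun_def not_le)

lemma weight_add_diff: "(l :: 'd::finite \<Rightarrow> nat) \<le> k \<Longrightarrow> weight l + weight (k - l) = weight k"
  by (simp add: weight_def sum.distrib[symmetric] le_fun_def)

lemma weight_mono: "(l :: 'd::finite \<Rightarrow> nat) \<le> k \<Longrightarrow> weight l \<le> weight k"
  using weight_add_diff[of l k] by linarith

lemma weight_eq_0_iff: "weight (k :: 'd::finite \<Rightarrow> nat) = 0 \<longleftrightarrow> k = 0"
  by (auto simp: weight_def fun_eq_iff)

lemma conv_pow_eq_0:
  assumes "A 0 = 0" and "weight k < n"
  shows "conv_pow A n k = 0"
  using assms(2)
proof (induction n arbitrary: k)
  case (Suc n)
  have "conv_pow A n l ** A (k - l) = 0" if "l \<le> k" for l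
  proof (cases "weight l < n")
    case False
    then have "k - l = 0"
      using weight_add_diff[OF \<open>l \<le> k\<close>] Suc.prems by (simp flip: weight_eq_0_iff)
    then show ?thesis by (simp add: assms(1))
  qed (simp add: Suc.IH)
  then show ?case by (simp add: conv_altdef)
qed simp

lemma suminf_conv_pow:
  assumes "A 0 = 0" and "weight k \<le> N"
  shows "(\<Sum>n. conv_pow A n k) = (\<Sum>n\<le>N. conv_pow A n k)"
proof (rule suminf_finite)
  fix n assume "n \<notin> {..N}"
  with assms show "conv_pow A n k = 0" by (intro conv_pow_eq_0) auto
qed simp

section \<open>Path probabilities\<close>

lemma conv_pow_Suc_entry:
  "conv_pow (to_mseq q) (Suc r) k $ i $ j
     = (\<Sum>i'\<in>UNIV. \<Sum>c\<le>k. conv_pow (to_mseq q) r c $ i $ i' * q i' j (k - c))"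
  by (simp add: conv_altdef matrix_matrix_mult_def to_mseq_def sum.swap[of _ UNIV])

lemma MRC_markov_property:
  assumes "MRC M J S q"
  shows "measure M {\<omega>\<in>space M. (\<forall>m\<le>n. J m \<omega> = jj m \<and> S m \<omega> = ss m)
                          \<and> J (Suc n) \<omega> = j \<and> S (Suc n) \<omega> - S n \<omega> = k}
   = measure M {\<omega>\<in>space M. \<forall>m\<le>n. J m \<omega> = jj m \<and> S m \<omega> = ss m} * q (jj n) j k"
  using assms by (simp add: MRC_def)

locale markov_renewal_chain =
  fixes M :: "'a measure" and J :: "nat \<Rightarrow> 'a \<Rightarrow> 'e::finite"
    and S :: "nat \<Rightarrow> 'a \<Rightarrow> ('d::finite \<Rightarrow> nat)" and q :: "'e \<Rightarrow> 'e \<Rightarrow> ('d \<Rightarrow> nat) \<Rightarrow> real"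
  assumes MRC: "MRC M J S q"
    \<comment> \<open>MRC fixes q only on states that are reached with positive probability\<close>
    and kernel_nonneg: "\<And>i j k. 0 \<le> q i j k"
begin

sublocale prob_space M
  using MRC by (simp add: MRC_def)

lemma J_measurable [measurable]: "J n \<in> measurable M (count_space UNIV)"
  using MRC by (simp add: MRC_def)

lemma S_measurable [measurable]: "S n \<in> measurable M (count_space UNIV)"
  using MRC by (simp add: MRC_def)

definition increasing_times :: "'a \<Rightarrow> bool" where
  "increasing_times \<omega> \<longleftrightarrow> S 0 \<omega> = 0 \<and> (\<forall>n. S n \<omega> < S (Suc n) \<omega>)"

lemma AE_increasing_times: "AE \<omega> in M. increasing_times \<omega>"
proof -
  have "AE \<omega> in M. S 0 \<omega> = 0" using MRC by (simp add: MRC_def)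
  moreover have "AE \<omega> in M. \<forall>n. S n \<omega> < S (Suc n) \<omega>"
    using MRC by (subst AE_all_countable) (simp add: MRC_def)
  ultimately show ?thesis by eventually_elim (simp add: increasing_times_def)
qed

lemma increasing_times_mono: "increasing_times \<omega> \<Longrightarrow> m \<le> n \<Longrightarrow> S m \<omega> \<le> S n \<omega>"
  by (rule lift_Suc_mono_le[of "\<lambda>n. S n \<omega>"]) (auto simp: increasing_times_def less_imp_le)

lemma increasing_times_weight: "increasing_times \<omega> \<Longrightarrow> n \<le> weight (S n \<omega>)"
proof (induction n)
  case (Suc n)
  then have "weight (S n \<omega>) < weight (S (Suc n) \<omega>)"
    by (intro weight_strict_mono) (auto simp: increasing_times_def)
  with Suc show ?case by simp
qed simp

definition path :: "nat \<Rightarrow> 'a \<Rightarrow> ('e \<times> ('d \<Rightarrow> nat)) list" where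
  "path n \<omega> = map (\<lambda>m. (J m \<omega>, S m \<omega>)) [0..<Suc n]"

lemma length_path [simp]: "length (path n \<omega>) = Suc n"
  by (simp add: path_def)

lemma path_nth [simp]: "m \<le> n \<Longrightarrow> path n \<omega> ! m = (J m \<omega>, S m \<omega>)"
  by (simp add: path_def nth_map_upt del: upt_Suc)

lemma path_eq_iff:
  "path n \<omega> = x \<longleftrightarrow> length x = Suc n \<and> (\<forall>m\<le>n. x ! m = (J m \<omega>, S m \<omega>))"
  by (auto simp: list_eq_iff_nth_eq less_Suc_eq_le)

lemma take_path: "m \<le> n \<Longrightarrow> take (Suc m) (path n \<omega>) = path m \<omega>"
  by (simp add: list_eq_iff_nth_eq min_def less_Suc_eq_le)

lemma path_measurable [measurable]: "path n \<in> measurable M (count_space UNIV)"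
proof (rule measurable_count_space_eq2_countable[THEN iffD2], safe)
  fix x
  have "path n -` {x} \<inter> space M
      = {\<omega>\<in>space M. length x = Suc n \<and> (\<forall>m\<le>n. x ! m = (J m \<omega>, S m \<omega>))}"
    by (auto simp: path_eq_iff)
  also have "\<dots> \<in> sets M" by measurable
  finally show "path n -` {x} \<inter> space M \<in> sets M" .
qed auto

definition path_event :: "nat \<Rightarrow> ('e \<times> ('d \<Rightarrow> nat)) list set \<Rightarrow> 'a set" where
  "path_event n A = {\<omega>\<in>space M. path n \<omega> \<in> A}"

lemma path_event_sets [measurable]: "path_event n A \<in> sets M"
  unfolding path_event_def by measurable

lemma measure_path_step:
  "measure M ({\<omega>\<in>space M. path n \<omega> = x} \<inter> {\<omega>\<in>space M. J (Suc n) \<omega> = j \<and> S (Suc n) \<omega> - S n \<omega> = k})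
     = measure M {\<omega>\<in>space M. path n \<omega> = x} * q (fst (x ! n)) j k"
proof (cases "length x = Suc n")
  case True
  then have "{\<omega>\<in>space M. \<forall>m\<le>n. J m \<omega> = fst (x ! m) \<and> S m \<omega> = snd (x ! m)}
        = {\<omega>\<in>space M. path n \<omega> = x}"
    and "{\<omega>\<in>space M. (\<forall>m\<le>n. J m \<omega> = fst (x ! m) \<and> S m \<omega> = snd (x ! m))
                     \<and> J (Suc n) \<omega> = j \<and> S (Suc n) \<omega> - S n \<omega> = k}
        = {\<omega>\<in>space M. path n \<omega> = x} \<inter> {\<omega>\<in>space M. J (Suc n) \<omega> = j \<and> S (Suc n) \<omega> - S n \<omega> = k}"
    by (auto simp: path_eq_iff prod_eq_iff)
  then show ?thesis
    using MRC_markov_property[OF MRC, of n "\<lambda>m. fst (x ! m)" "\<lambda>m. snd (x ! m)" j k] by simp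
qed (auto simp: path_eq_iff)

lemma measure_path_event_step:
  assumes "\<forall>x\<in>A. fst (x ! n) = i"
  shows "measure M (path_event n A \<inter> {\<omega>\<in>space M. J (Suc n) \<omega> = j \<and> S (Suc n) \<omega> - S n \<omega> = k})
       = measure M (path_event n A) * q i j k"
proof -
  define E where "E = {\<omega>\<in>space M. J (Suc n) \<omega> = j \<and> S (Suc n) \<omega> - S n \<omega> = k}"
  define X where "X x = {\<omega>\<in>space M. path n \<omega> = x}" for x
  have [measurable]: "E \<in> sets M" "X x \<in> sets M" for x
    unfolding E_def X_def by measurable
  have disjoint: "disjoint_family_on X A" "disjoint_family_on (\<lambda>x. X x \<inter> E) A"
    by (auto simp: disjoint_family_on_def X_def)
  have "emeasure M (path_event n A \<inter> E) = emeasure M (\<Union>x\<in>A. X x \<inter> E)"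
    by (rule arg_cong[where f="emeasure M"]) (auto simp: path_event_def X_def)
  also have "\<dots> = (\<integral>\<^sup>+x. emeasure M (X x \<inter> E) \<partial>count_space A)"
    by (rule emeasure_UN_countable) (use disjoint in auto)
  also have "\<dots> = (\<integral>\<^sup>+x. emeasure M (X x) * ennreal (q i j k) \<partial>count_space A)"
    using assms by (intro nn_integral_cong)
      (simp add: X_def E_def emeasure_eq_measure measure_path_step ennreal_mult kernel_nonneg)
  also have "\<dots> = (\<integral>\<^sup>+x. emeasure M (X x) \<partial>count_space A) * ennreal (q i j k)"
    by (rule nn_integral_multc) auto
  also have "(\<integral>\<^sup>+x. emeasure M (X x) \<partial>count_space A) = emeasure M (\<Union>x\<in>A. X x)"
    by (rule emeasure_UN_countable[symmetric]) (use disjoint in auto)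
  also have "(\<Union>x\<in>A. X x) = path_event n A"
    by (auto simp: path_event_def X_def)
  finally have "ennreal (measure M (path_event n A \<inter> E)) = ennreal (measure M (path_event n A) * q i j k)"
    by (simp add: emeasure_eq_measure ennreal_mult kernel_nonneg)
  then show ?thesis
    unfolding E_def by (simp add: kernel_nonneg)
qed

lemma path_event_extend:
  assumes "m \<le> n"
  shows "path_event n {x. length x = Suc n \<and> take (Suc m) x \<in> A \<and> P (x ! n)}
       = path_event m A \<inter> {\<omega>\<in>space M. P (J n \<omega>, S n \<omega>)}"
  using assms by (auto simp: path_event_def take_path)

lemma AE_path_event_time_split:
  assumes A: "\<forall>x\<in>A. x ! n = (i, l)" and "n \<le> m"
  shows "AE \<omega> in M. \<omega> \<in> path_event n A \<longrightarrow>
           (S (Suc m) \<omega> = l + k \<longleftrightarrow> (\<exists>c\<le>k. S m \<omega> = l + c \<and> S (Suc m) \<omega> - S m \<omega> = k - c))"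
  using AE_increasing_times
proof eventually_elim
  case (elim \<omega>)
  show ?case
  proof
    assume "\<omega> \<in> path_event n A"
    then have "l \<le> S m \<omega>"
      using A increasing_times_mono[OF elim \<open>n \<le> m\<close>] by (auto simp: path_event_def)
    moreover have "S m \<omega> \<le> S (Suc m) \<omega>"
      by (rule increasing_times_mono[OF elim]) simp
    ultimately show "S (Suc m) \<omega> = l + k \<longleftrightarrow> (\<exists>c\<le>k. S m \<omega> = l + c \<and> S (Suc m) \<omega> - S m \<omega> = k - c)"
      by (rule fun_eq_add_split)
  qed
qed

lemma measure_path_event_Suc:
  assumes A: "\<forall>x\<in>A. x ! n = (i, l)" and "n \<le> m"
  shows "measure M (path_event n A \<inter> {\<omega>\<in>space M. J (Suc m) \<omega> = j \<and> S (Suc m) \<omega> = l + k})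
       = (\<Sum>i'\<in>UNIV. \<Sum>c\<le>k. measure M (path_event n A \<inter> {\<omega>\<in>space M. J m \<omega> = i' \<and> S m \<omega> = l + c})
                              * q i' j (k - c))"
proof -
  define E where "E p = path_event n A \<inter> {\<omega>\<in>space M. J m \<omega> = fst p \<and> S m \<omega> = l + snd p}" for p
  define F where "F p = E p \<inter> {\<omega>\<in>space M. J (Suc m) \<omega> = j \<and> S (Suc m) \<omega> - S m \<omega> = k - snd p}" for p
  have [measurable]: "E p \<in> sets M" "F p \<in> sets M" for p
    unfolding E_def F_def by measurable
  let ?L = "path_event n A \<inter> {\<omega>\<in>space M. J (Suc m) \<omega> = j \<and> S (Suc m) \<omega> = l + k}"
  have "measure M ?L = measure M (\<Union>p\<in>UNIV \<times> {..k}. F p)"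
    using AE_path_event_time_split[OF A \<open>n \<le> m\<close>, of k]
    by (intro measure_eq_AE) (auto simp: F_def E_def)
  also have "\<dots> = (\<Sum>p\<in>UNIV \<times> {..k}. measure M (F p))"
    by (rule finite_measure_finite_Union) (auto simp: disjoint_family_on_def F_def E_def)
  also have "\<dots> = (\<Sum>p\<in>UNIV \<times> {..k}. measure M (E p) * q (fst p) j (k - snd p))"
  proof (rule sum.cong[OF refl])
    fix p :: "'e \<times> ('d \<Rightarrow> nat)"
    have "E p = path_event m {x. length x = Suc m \<and> take (Suc n) x \<in> A \<and> x ! m = (fst p, l + snd p)}"
      unfolding E_def using \<open>n \<le> m\<close> by (subst path_event_extend) auto
    then show "measure M (F p) = measure M (E p) * q (fst p) j (k - snd p)"
      unfolding F_def by (simp add: measure_path_event_step)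
  qed
  finally show ?thesis
    by (simp add: sum.cartesian_product split_def E_def)
qed

lemma measure_path_event_conv_pow:
  assumes A: "\<forall>x\<in>A. x ! n = (i, l)"
  shows "measure M (path_event n A \<inter> {\<omega>\<in>space M. J (n + r) \<omega> = j \<and> S (n + r) \<omega> = l + k})
       = measure M (path_event n A) * conv_pow (to_mseq q) r k $ i $ j"
proof (induction r arbitrary: j k)
  case 0
  have "path_event n A \<inter> {\<omega>\<in>space M. J (n + 0) \<omega> = j \<and> S (n + 0) \<omega> = l + k}
      = (if i = j \<and> k = 0 then path_event n A else {})"
    using A by (auto simp: path_event_def fun_eq_iff)
  then show ?case
    by (simp only:) (simp add: conv_id_def mat_def)
next
  case (Suc r)
  have "measure M (path_event n A \<inter> {\<omega>\<in>space M. J (n + Suc r) \<omega> = j \<and> S (n + Suc r) \<omega> = l + k})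
      = (\<Sum>i'\<in>UNIV. \<Sum>c\<le>k. measure M (path_event n A) * conv_pow (to_mseq q) r c $ i $ i'
                              * q i' j (k - c))"
    using measure_path_event_Suc[OF A, of "n + r"] by (simp add: Suc.IH)
  also have "\<dots> = measure M (path_event n A) * conv_pow (to_mseq q) (Suc r) k $ i $ j"
    by (simp only: conv_pow_Suc_entry sum_distrib_left mult.assoc)
  finally show ?case .
qed

lemma prob_state_time_eq_conv_pow:
  assumes start: "AE \<omega> in M. J 0 \<omega> = i"
  shows "measure M {\<omega>\<in>space M. J n \<omega> = j \<and> S n \<omega> = k} = conv_pow (to_mseq q) n k $ i $ j"
proof -
  define A where "A = {[(i, 0 :: 'd \<Rightarrow> nat)]}"
  have initial: "path_event 0 A = {\<omega>\<in>space M. J 0 \<omega> = i \<and> S 0 \<omega> = 0}"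
    by (auto simp: path_event_def A_def path_eq_iff)
  have AE_initial: "AE \<omega> in M. J 0 \<omega> = i \<and> S 0 \<omega> = 0"
    using start AE_increasing_times by eventually_elim (simp add: increasing_times_def)
  then have "measure M (path_event 0 A) = 1"
    unfolding initial by (subst prob_Collect_eq_1) auto
  moreover have "measure M {\<omega>\<in>space M. J n \<omega> = j \<and> S n \<omega> = k}
      = measure M (path_event 0 A \<inter> {\<omega>\<in>space M. J (0 + n) \<omega> = j \<and> S (0 + n) \<omega> = 0 + k})"
    by (rule measure_eq_AE) (use AE_initial in \<open>auto simp: initial\<close>)
  ultimately show ?thesis
    using measure_path_event_conv_pow[of A 0 i 0 n j k] by (simp add: A_def)
qed

section \<open>First visits\<close>

definition first_visit :: "'e \<Rightarrow> nat \<Rightarrow> ('d \<Rightarrow> nat) \<Rightarrow> 'a set" where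
  "first_visit j m l = {\<omega>\<in>space M. J m \<omega> = j \<and> (\<forall>t. 1 \<le> t \<and> t < m \<longrightarrow> J t \<omega> \<noteq> j) \<and> S m \<omega> = l}"

lemma first_visit_sets [measurable]: "first_visit j m l \<in> sets M"
  unfolding first_visit_def by measurable

lemma first_visit_unique:
  "\<omega> \<in> first_visit j m l \<Longrightarrow> \<omega> \<in> first_visit j m' l' \<Longrightarrow> 1 \<le> m \<Longrightarrow> 1 \<le> m' \<Longrightarrow> m = m' \<and> l = l'"
  unfolding first_visit_def by (metis (mono_tags, lifting) linorder_neqE_nat mem_Collect_eq)

lemma first_visit_eq_path_event:
  "first_visit j m l
     = path_event m {x. length x = Suc m \<and> x ! m = (j, l) \<and> (\<forall>t. 1 \<le> t \<and> t < m \<longrightarrow> fst (x ! t) \<noteq> j)}"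
  by (auto simp: first_visit_def path_event_def)

lemma first_visit_null:
  assumes "weight l < m"
  shows "measure M (first_visit j m l) = 0"
proof -
  have "AE \<omega> in M. \<omega> \<notin> first_visit j m l"
    using AE_increasing_times
  proof eventually_elim
    case (elim \<omega>)
    then show ?case
      using increasing_times_weight[OF elim, of m] assms by (auto simp: first_visit_def)
  qed
  then show ?thesis
    by (subst measure_eq_AE[where B="{}"]) auto
qed

lemma first_visit_iff_Least:
  assumes "1 \<le> m"
  shows "\<omega> \<in> first_visit j m l \<longleftrightarrow>
    \<omega> \<in> space M \<and> (\<exists>t\<ge>1. J t \<omega> = j) \<and> (LEAST t. 1 \<le> t \<and> J t \<omega> = j) = m \<and> S m \<omega> = l"
proof
  assume "\<omega> \<in> first_visit j m l"
  moreover from this have "(LEAST t. 1 \<le> t \<and> J t \<omega> = j) = m"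
    using assms by (intro Least_equality) (auto simp: first_visit_def not_less[symmetric])
  ultimately show "\<omega> \<in> space M \<and> (\<exists>t\<ge>1. J t \<omega> = j) \<and> (LEAST t. 1 \<le> t \<and> J t \<omega> = j) = m \<and> S m \<omega> = l"
    using assms by (auto simp: first_visit_def)
next
  assume *: "\<omega> \<in> space M \<and> (\<exists>t\<ge>1. J t \<omega> = j) \<and> (LEAST t. 1 \<le> t \<and> J t \<omega> = j) = m \<and> S m \<omega> = l"
  then have "1 \<le> m \<and> J m \<omega> = j"
    by (metis (mono_tags, lifting) LeastI)
  moreover have "J t \<omega> \<noteq> j" if "1 \<le> t" "t < m" for t
    using * that not_less_Least by blast
  ultimately show "\<omega> \<in> first_visit j m l"
    using * by (auto simp: first_visit_def)
qed

lemma first_visit_exists: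
  assumes "\<omega> \<in> space M" and "1 \<le> n" and "J n \<omega> = j"
  shows "\<exists>m\<in>{1..n}. \<omega> \<in> first_visit j m (S m \<omega>)"
proof -
  define m where "m = (LEAST t. 1 \<le> t \<and> J t \<omega> = j)"
  have visit: "1 \<le> n \<and> J n \<omega> = j"
    using assms by simp
  have "1 \<le> m \<and> J m \<omega> = j" and "m \<le> n"
    unfolding m_def
    by (rule LeastI[of "\<lambda>t. 1 \<le> t \<and> J t \<omega> = j", OF visit],
        rule Least_le[of "\<lambda>t. 1 \<le> t \<and> J t \<omega> = j", OF visit])
  moreover have "\<omega> \<in> first_visit j m (S m \<omega>)"
    using first_visit_iff_Least[of m \<omega> j "S m \<omega>"] calculation assms(1) visit by (auto simp: m_def)
  ultimately show ?thesis by auto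
qed

lemma hit_iff_first_visit:
  "\<omega> \<in> {\<omega>\<in>space M. (\<exists>t\<ge>1. J t \<omega> = j) \<and> S (LEAST t. 1 \<le> t \<and> J t \<omega> = j) \<omega> = k}
     \<longleftrightarrow> (\<exists>m\<ge>1. \<omega> \<in> first_visit j m k)" (is "?hit \<longleftrightarrow> _")
proof
  assume ?hit
  then obtain t where "\<omega> \<in> space M" "1 \<le> t" "J t \<omega> = j" by auto
  then obtain m where "1 \<le> m" "\<omega> \<in> first_visit j m (S m \<omega>)"
    using first_visit_exists[of \<omega> t j] by auto
  moreover from this have "S m \<omega> = k"
    using \<open>?hit\<close> first_visit_iff_Least[of m \<omega> j "S m \<omega>"] by auto
  ultimately show "\<exists>m\<ge>1. \<omega> \<in> first_visit j m k" by auto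
qed (auto simp: first_visit_iff_Least)

lemma prob_state_time_first_visit:
  assumes "1 \<le> n"
  shows "measure M {\<omega>\<in>space M. J n \<omega> = j \<and> S n \<omega> = k}
       = (\<Sum>m\<in>{1..n}. \<Sum>l\<le>k. measure M (first_visit j m l) * conv_pow (to_mseq q) (n - m) (k - l) $ j $ j)"
proof -
  define G where "G p = first_visit j (fst p) (snd p) \<inter> {\<omega>\<in>space M. J (fst p + (n - fst p)) \<omega> = j
                        \<and> S (fst p + (n - fst p)) \<omega> = snd p + (k - snd p)}" for p
  have [measurable]: "G p \<in> sets M" for p
    unfolding G_def by measurable
  have "measure M {\<omega>\<in>space M. J n \<omega> = j \<and> S n \<omega> = k} = measure M (\<Union>p\<in>{1..n} \<times> {..k}. G p)"
  proof (rule measure_eq_AE)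
    show "AE \<omega> in M. \<omega> \<in> {\<omega>\<in>space M. J n \<omega> = j \<and> S n \<omega> = k} \<longleftrightarrow> \<omega> \<in> (\<Union>p\<in>{1..n} \<times> {..k}. G p)"
      using AE_increasing_times
    proof eventually_elim
      case (elim \<omega>)
      show ?case
      proof
        assume visit: "\<omega> \<in> {\<omega>\<in>space M. J n \<omega> = j \<and> S n \<omega> = k}"
        then obtain m where "m \<in> {1..n}" "\<omega> \<in> first_visit j m (S m \<omega>)"
          using first_visit_exists assms by blast
        moreover from this have "S m \<omega> \<le> k"
          using increasing_times_mono[OF elim, of m n] visit by simp
        ultimately show "\<omega> \<in> (\<Union>p\<in>{1..n} \<times> {..k}. G p)"
          using visit by (intro UN_I[of "(m, S m \<omega>)"]) (auto simp: G_def fun_diff_add_cancel)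
      qed (auto simp: G_def fun_diff_add_cancel)
    qed
  qed measurable
  also have "\<dots> = (\<Sum>p\<in>{1..n} \<times> {..k}. measure M (G p))"
    by (rule finite_measure_finite_Union) (auto simp: disjoint_family_on_def G_def dest: first_visit_unique)
  also have "\<dots> = (\<Sum>p\<in>{1..n} \<times> {..k}. measure M (first_visit j (fst p) (snd p))
                    * conv_pow (to_mseq q) (n - fst p) (k - snd p) $ j $ j)"
    unfolding G_def first_visit_eq_path_event by (intro sum.cong refl measure_path_event_conv_pow) auto
  finally show ?thesis
    by (simp add: sum.cartesian_product split_def)
qed

lemma prob_hit_eq_sum_first_visit:
  assumes "weight k \<le> N"
  shows "measure M {\<omega>\<in>space M. (\<exists>t\<ge>1. J t \<omega> = j) \<and> S (LEAST t. 1 \<le> t \<and> J t \<omega> = j) \<omega> = k}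
       = (\<Sum>m\<in>{1..N}. measure M (first_visit j m k))"
proof -
  have "AE \<omega> in M. (\<exists>m\<ge>1. \<omega> \<in> first_visit j m k) \<longleftrightarrow> \<omega> \<in> (\<Union>m\<in>{1..N}. first_visit j m k)"
    using AE_increasing_times
  proof eventually_elim
    case (elim \<omega>)
    have "m \<le> N" if "\<omega> \<in> first_visit j m k" for m
      using that increasing_times_weight[OF elim, of m] assms by (auto simp: first_visit_def)
    then show ?case by auto
  qed
  then have "measure M {\<omega>\<in>space M. (\<exists>t\<ge>1. J t \<omega> = j) \<and> S (LEAST t. 1 \<le> t \<and> J t \<omega> = j) \<omega> = k}
      = measure M (\<Union>m\<in>{1..N}. first_visit j m k)"
    by (intro measure_eq_AE) (simp_all only: hit_iff_first_visit, measurable)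
  also have "\<dots> = (\<Sum>m\<in>{1..N}. measure M (first_visit j m k))"
    by (rule finite_measure_finite_Union) (auto simp: disjoint_family_on_def dest: first_visit_unique)
  finally show ?thesis .
qed

section \<open>Expected number of visits\<close>

lemma Ncount_measurable [measurable]: "Ncount S k \<in> measurable M (count_space UNIV)"
  unfolding Ncount_def by measurable

lemma Ntilde_measurable [measurable]: "(\<lambda>\<omega>. real (Ntilde J S j k \<omega>)) \<in> borel_measurable M"
proof -
  have "(\<lambda>\<omega>. real (\<Sum>n\<le>Ncount S k \<omega>. if J n \<omega> = j then 1 else 0 :: nat)) \<in> borel_measurable M"
    by (rule measurable_compose_countable[OF _ Ncount_measurable]) measurable
  then show ?thesis by (simp add: Ntilde_def)
qed

lemma increasing_times_Ncount:
  assumes "increasing_times \<omega>"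
  shows "{n. S n \<omega> \<le> k} = {..Ncount S k \<omega>}" and "Ncount S k \<omega> \<le> weight k"
proof -
  define X where "X = {n. S n \<omega> \<le> k}"
  have "0 \<in> X" using assms by (simp add: X_def increasing_times_def)
  have "X \<subseteq> {..weight k}"
  proof
    fix n assume "n \<in> X"
    then have "weight (S n \<omega>) \<le> weight k" by (intro weight_mono) (simp add: X_def)
    then show "n \<in> {..weight k}" using increasing_times_weight[OF assms, of n] by simp
  qed
  then have "finite X" by (rule finite_subset) simp
  have "Ncount S k \<omega> = Max X"
    unfolding Ncount_def X_def[symmetric] Sup_nat_def using \<open>0 \<in> X\<close> by auto
  moreover have "Max X \<in> X"
    using \<open>finite X\<close> \<open>0 \<in> X\<close> by (intro Max_in) auto
  moreover have "X = {..Max X}"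
  proof
    show "X \<subseteq> {..Max X}" using \<open>finite X\<close> by auto
    show "{..Max X} \<subseteq> X"
      using \<open>Max X \<in> X\<close> increasing_times_mono[OF assms] by (auto simp: X_def intro: order_trans)
  qed
  ultimately show "{n. S n \<omega> \<le> k} = {..Ncount S k \<omega>}" and "Ncount S k \<omega> \<le> weight k"
    using \<open>X \<subseteq> {..weight k}\<close> by (auto simp: X_def)
qed

lemma Ntilde_eq_sum_indicator:
  assumes "increasing_times \<omega>" and "\<omega> \<in> space M"
  shows "real (Ntilde J S j k \<omega>) = (\<Sum>n\<le>weight k. indicator {\<omega>\<in>space M. J n \<omega> = j \<and> S n \<omega> \<le> k} \<omega>)"
proof -
  note times = increasing_times_Ncount[OF assms(1), of k]
  have "(\<Sum>n\<le>weight k. indicator {\<omega>\<in>space M. J n \<omega> = j \<and> S n \<omega> \<le> k} \<omega>)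
      = (\<Sum>n\<le>weight k. if n \<in> {..Ncount S k \<omega>} then (if J n \<omega> = j then 1 else 0) else 0 :: real)"
    using assms(2) by (intro sum.cong refl) (auto simp: indicator_def times(1)[symmetric])
  also have "\<dots> = (\<Sum>n\<in>{..weight k} \<inter> {..Ncount S k \<omega>}. if J n \<omega> = j then 1 else 0)"
    by (rule sum.inter_restrict[symmetric]) simp
  also have "{..weight k} \<inter> {..Ncount S k \<omega>} = {..Ncount S k \<omega>}"
    using times(2) by auto
  finally show ?thesis
    by (auto simp: Ntilde_def intro!: sum.cong)
qed

lemma expected_Ntilde:
  "(\<integral>\<omega>. real (Ntilde J S j k \<omega>) \<partial>M) = (\<Sum>n\<le>weight k. measure M {\<omega>\<in>space M. J n \<omega> = j \<and> S n \<omega> \<le> k})"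
proof -
  have "(\<integral>\<omega>. real (Ntilde J S j k \<omega>) \<partial>M)
      = (\<integral>\<omega>. (\<Sum>n\<le>weight k. indicator {\<omega>\<in>space M. J n \<omega> = j \<and> S n \<omega> \<le> k} \<omega>) \<partial>M)"
    by (intro integral_cong_AE) (use AE_increasing_times AE_space in \<open>auto intro: Ntilde_eq_sum_indicator\<close>)
  also have "\<dots> = (\<Sum>n\<le>weight k. measure M {\<omega>\<in>space M. J n \<omega> = j \<and> S n \<omega> \<le> k})"
  proof -
    have "integrable M (indicator {\<omega>\<in>space M. J n \<omega> = j \<and> S n \<omega> \<le> k} :: _ \<Rightarrow> real)" for n
      by (rule integrable_real_indicator) (measurable, simp add: less_top[symmetric])
    moreover have "{\<omega>\<in>space M. J n \<omega> = j \<and> S n \<omega> \<le> k} \<inter> space M = {\<omega>\<in>space M. J n \<omega> = j \<and> S n \<omega> \<le> k}"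
      for n by auto
    ultimately show ?thesis by (simp add: integral_sum)
  qed
  finally show ?thesis .
qed

lemma prob_state_time_le:
  "measure M {\<omega>\<in>space M. J n \<omega> = j \<and> S n \<omega> \<le> k}
     = (\<Sum>l\<le>k. measure M {\<omega>\<in>space M. J n \<omega> = j \<and> S n \<omega> = l})"
proof -
  have "{\<omega>\<in>space M. J n \<omega> = j \<and> S n \<omega> \<le> k} = (\<Union>l\<le>k. {\<omega>\<in>space M. J n \<omega> = j \<and> S n \<omega> = l})"
    by auto
  also have "measure M \<dots> = (\<Sum>l\<le>k. measure M {\<omega>\<in>space M. J n \<omega> = j \<and> S n \<omega> = l})"
    by (rule finite_measure_finite_Union) (auto simp: disjoint_family_on_def)
  finally show ?thesis .
qed

end

section \<open>The Markov renewal equation\<close>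

lemma sum_triangle_atLeast1:
  fixes H :: "nat \<Rightarrow> nat \<Rightarrow> 'b::comm_monoid_add"
  shows "(\<Sum>n\<in>{1..K}. \<Sum>m\<in>{1..n}. H m (n - m)) = (\<Sum>m\<in>{1..K}. \<Sum>r\<le>K - m. H m r)"
proof -
  have "(\<Sum>n\<in>{1..K}. \<Sum>m\<in>{1..n}. H m (n - m)) = (\<Sum>n\<in>{1..K}. \<Sum>m\<in>{m\<in>{1..K}. m \<le> n}. H m (n - m))"
    by (intro sum.cong refl) auto
  also have "\<dots> = (\<Sum>m\<in>{1..K}. \<Sum>n\<in>{n\<in>{1..K}. m \<le> n}. H m (n - m))"
    by (rule sum.swap_restrict) auto
  also have "\<dots> = (\<Sum>m\<in>{1..K}. \<Sum>r\<le>K - m. H m r)"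
    by (intro sum.cong refl sum.reindex_bij_witness[where i="\<lambda>r. r + m" and j="\<lambda>n. n - m" for m]) auto
  finally show ?thesis .
qed

lemma to_mseq_hit_dist: "to_mseq (hit_dist M J S) = conv (to_mseq (hit_dens M J S)) dg_one"
  by (simp add: fun_eq_iff vec_eq_iff conv_dg_one hit_dist_def to_mseq_def atMost_def)

definition renewal_dens :: "('e::finite \<Rightarrow> 'e \<Rightarrow> ('d::finite \<Rightarrow> nat) \<Rightarrow> real) \<Rightarrow> ('d, 'e) mseq" where
  "renewal_dens q = (\<lambda>k. \<Sum>n. conv_pow (to_mseq q) n k)"

locale markov_renewal_family =
  fixes M :: "'e::finite \<Rightarrow> 'a measure" and J :: "nat \<Rightarrow> 'a \<Rightarrow> 'e"
    and S :: "nat \<Rightarrow> 'a \<Rightarrow> ('d::finite \<Rightarrow> nat)" and q :: "'e \<Rightarrow> 'e \<Rightarrow> ('d \<Rightarrow> nat) \<Rightarrow> real"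
  assumes chain: "\<And>i. MRC (M i) J S q"
    and start: "\<And>i. AE \<omega> in M i. J 0 \<omega> = i"
begin

lemma kernel_eq_prob:
  "q i j k = measure (M i) {\<omega>\<in>space (M i). (\<forall>m\<le>0. J m \<omega> = i \<and> S m \<omega> = 0)
                             \<and> J (Suc 0) \<omega> = j \<and> S (Suc 0) \<omega> - S 0 \<omega> = k}"
proof -
  interpret prob_space "M i" using chain by (simp add: MRC_def)
  have [measurable]: "J n \<in> measurable (M i) (count_space UNIV)" "S n \<in> measurable (M i) (count_space UNIV)" for n
    using chain by (auto simp: MRC_def)
  have "AE \<omega> in M i. J 0 \<omega> = i \<and> S 0 \<omega> = 0"
    using start[of i] chain[of i] by (simp add: MRC_def)
  then have "measure (M i) {\<omega>\<in>space (M i). \<forall>m\<le>0. J m \<omega> = i \<and> S m \<omega> = 0} = 1"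
    by (subst prob_Collect_eq_1) auto
  moreover have "measure (M i) {\<omega>\<in>space (M i). (\<forall>m\<le>0. J m \<omega> = i \<and> S m \<omega> = 0)
                             \<and> J (Suc 0) \<omega> = j \<and> S (Suc 0) \<omega> - S 0 \<omega> = k}
      = measure (M i) {\<omega>\<in>space (M i). \<forall>m\<le>0. J m \<omega> = i \<and> S m \<omega> = 0} * q i j k"
    using MRC_markov_property[OF chain[of i], of 0 "\<lambda>_. i" "\<lambda>_. 0"] by simp
  ultimately show ?thesis
    by simp
qed

lemma kernel_nonneg: "0 \<le> q i j k"
  by (simp add: kernel_eq_prob)

sublocale markov_renewal_chain "M i" J S q for i
  by unfold_locales (rule chain kernel_nonneg)+

lemma kernel_zero_time: "q i j 0 = 0"
proof -
  have "AE \<omega> in M i. S (Suc 0) \<omega> - S 0 \<omega> \<noteq> 0"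
    using AE_increasing_times[of i]
  proof eventually_elim
    case (elim \<omega>)
    then have "S 0 \<omega> < S (Suc 0) \<omega>"
      unfolding increasing_times_def by blast
    then obtain d where "S 0 \<omega> d < S (Suc 0) \<omega> d"
      by (auto simp: less_fun_def le_fun_def not_le)
    then show ?case by (auto simp: fun_eq_iff intro!: exI[of _ d])
  qed
  then show ?thesis
    unfolding kernel_eq_prob by (subst measure_eq_AE[where B="{}"]) auto
qed

lemma renewal_dens_eq_sum:
  assumes "weight k \<le> N"
  shows "renewal_dens q k = (\<Sum>n\<le>N. conv_pow (to_mseq q) n k)"
  unfolding renewal_dens_def
  by (rule suminf_conv_pow[OF _ assms]) (simp add: to_mseq_def kernel_zero_time vec_eq_iff)

lemma renewal_dens_eq_sum_prob:
  assumes "weight k \<le> N"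
  shows "renewal_dens q k $ i $ j = (\<Sum>n\<le>N. measure (M i) {\<omega>\<in>space (M i). J n \<omega> = j \<and> S n \<omega> = k})"
  by (simp add: renewal_dens_eq_sum[OF assms] prob_state_time_eq_conv_pow[OF start])

lemma renewal_fun_eq_conv: "to_mseq (renewal_fun M J S) = conv (renewal_dens q) dg_one"
proof (intro ext)
  fix k
  have "renewal_fun M J S i j k = (\<Sum>l\<le>k. renewal_dens q l $ i $ j)" for i j
  proof -
    have "renewal_fun M J S i j k
        = (\<Sum>n\<le>weight k. \<Sum>l\<le>k. measure (M i) {\<omega>\<in>space (M i). J n \<omega> = j \<and> S n \<omega> = l})"
      by (simp add: renewal_fun_def expected_Ntilde prob_state_time_le)
    also have "\<dots> = (\<Sum>l\<le>k. renewal_dens q l $ i $ j)"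
      by (subst sum.swap, intro sum.cong refl renewal_dens_eq_sum_prob[symmetric]) (simp add: weight_mono)
    finally show ?thesis .
  qed
  then show "to_mseq (renewal_fun M J S) k = conv (renewal_dens q) dg_one k"
    by (simp add: conv_dg_one to_mseq_def vec_eq_iff)
qed

lemma first_visit_renewal_dens_truncated:
  assumes "l \<le> k"
  shows "measure (M i) (first_visit i j m l) * (\<Sum>r\<le>weight k - m. conv_pow (to_mseq q) r (k - l) $ j $ j)
       = measure (M i) (first_visit i j m l) * renewal_dens q (k - l) $ j $ j"
proof (cases "weight l < m")
  case False
  then have "weight (k - l) \<le> weight k - m"
    using weight_add_diff[OF assms] by simp
  then show ?thesis by (simp add: renewal_dens_eq_sum)
qed (simp add: first_visit_null)

lemma first_passage_decomposition:
  "(\<Sum>n\<in>{1..weight k}. measure (M i) {\<omega>\<in>space (M i). J n \<omega> = j \<and> S n \<omega> = k})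
     = (\<Sum>l\<le>k. hit_dens M J S i j l * renewal_dens q (k - l) $ j $ j)"
proof -
  define K where "K = weight k"
  define f where "f m l = measure (M i) (first_visit i j m l)" for m l
  define Q where "Q r l = conv_pow (to_mseq q) r l $ j $ j" for r l
  have "(\<Sum>n\<in>{1..K}. measure (M i) {\<omega>\<in>space (M i). J n \<omega> = j \<and> S n \<omega> = k})
      = (\<Sum>n\<in>{1..K}. \<Sum>m\<in>{1..n}. \<Sum>l\<le>k. f m l * Q (n - m) (k - l))"
    unfolding f_def Q_def by (intro sum.cong refl prob_state_time_first_visit) auto
  also have "\<dots> = (\<Sum>m\<in>{1..K}. \<Sum>r\<le>K - m. \<Sum>l\<le>k. f m l * Q r (k - l))"
    by (rule sum_triangle_atLeast1)
  also have "\<dots> = (\<Sum>l\<le>k. \<Sum>m\<in>{1..K}. f m l * (\<Sum>r\<le>K - m. Q r (k - l)))"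
    by (simp add: sum_distrib_left sum.swap[of _ "{..k}"])
  also have "\<dots> = (\<Sum>l\<le>k. \<Sum>m\<in>{1..K}. f m l * renewal_dens q (k - l) $ j $ j)"
    unfolding f_def Q_def K_def by (intro sum.cong refl first_visit_renewal_dens_truncated) auto
  also have "\<dots> = (\<Sum>l\<le>k. hit_dens M J S i j l * renewal_dens q (k - l) $ j $ j)"
  proof (rule sum.cong[OF refl])
    fix l assume "l \<in> {..k}"
    then have "hit_dens M J S i j l = (\<Sum>m\<in>{1..K}. f m l)"
      unfolding hit_dens_def f_def K_def by (intro prob_hit_eq_sum_first_visit weight_mono) simp
    then show "(\<Sum>m\<in>{1..K}. f m l * renewal_dens q (k - l) $ j $ j)
        = hit_dens M J S i j l * renewal_dens q (k - l) $ j $ j"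
      by (simp add: sum_distrib_right)
  qed
  finally show ?thesis
    by (simp add: K_def)
qed

lemma markov_renewal_equation:
  "renewal_dens q = conv_id + conv (to_mseq (hit_dens M J S)) (dg (renewal_dens q))"
proof (intro ext)
  fix k
  have "renewal_dens q k $ i $ j
      = conv_id k $ i $ j + (\<Sum>l\<le>k. hit_dens M J S i j l * renewal_dens q (k - l) $ j $ j)" for i j
  proof -
    let ?P = "\<lambda>n. measure (M i) {\<omega>\<in>space (M i). J n \<omega> = j \<and> S n \<omega> = k}"
    have "renewal_dens q k $ i $ j = (\<Sum>n\<le>weight k. ?P n)"
      by (rule renewal_dens_eq_sum_prob) simp
    also have "\<dots> = ?P 0 + (\<Sum>n\<in>{1..weight k}. ?P n)"
      by (simp add: atMost_atLeast0 sum.atLeast_Suc_atMost)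
    also have "?P 0 = conv_id k $ i $ j"
      by (simp add: prob_state_time_eq_conv_pow[OF start])
    finally show ?thesis
      by (simp only: first_passage_decomposition)
  qed
  then show "renewal_dens q k = (conv_id + conv (to_mseq (hit_dens M J S)) (dg (renewal_dens q))) k"
    by (simp add: vec_eq_iff conv_altdef mult_dg_entry to_mseq_def)
qed

end

theorem corollary4:
  fixes M :: "'e::finite \<Rightarrow> 'a measure"
    and J :: "nat \<Rightarrow> 'a \<Rightarrow> 'e"
    and S :: "nat \<Rightarrow> 'a \<Rightarrow> ('d::finite \<Rightarrow> nat)"
    and q :: "'e \<Rightarrow> 'e \<Rightarrow> ('d \<Rightarrow> nat) \<Rightarrow> real"
  assumes chain: "\<And>i. MRC (M i) J S q"
    and start: "\<And>i. AE \<omega> in M i. J 0 \<omega> = i"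
  defines "u \<equiv> (\<lambda>k. \<Sum>n. conv_pow (to_mseq q) n k)"
  shows "to_mseq (hit_dist M J S)
         = conv (\<lambda>k. to_mseq (renewal_fun M J S) k - dg_one k) (conv_inv (dg u))"
proof -
  interpret markov_renewal_family M J S q
    by unfold_locales (rule chain start)+
  have "u = renewal_dens q"
    by (simp add: u_def renewal_dens_def)
  then show ?thesis
    using renewal_equation_solution[OF markov_renewal_equation]
    by (simp add: to_mseq_hit_dist renewal_fun_eq_conv fun_diff_def)
qed

end
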